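(* $\mathsf{MGrz}\vee\mathsf{GKur}=\mathsf{MGrz}\vee\mathsf{LKur}=\mathsf{MGrz}\vee\mathsf{N}$, where $\vee$ denotes the smallest extension of $\mathsf{MS4}$ containing both logics.
   Context: $\mathsf{MIPC}$ is the smallest set of formulas in the bimodal language $\mathcal{L}_{\forall\exists}$ containing all theorems of $\mathsf{IPC}$; $\forall(p\wedge q)\leftrightarrow(\forall p\wedge\forall q)$, $\forall p\to p$, $\forall p\to\forall\forall p$; $\exists(p\vee q)\leftrightarrow(\exists p\vee\exists q)$, $p\to\exists p$, $\exists\exists p\to\exists p$, $(\exists p\wedge\exists q)\to\exists(\exists p\wedge q)$; $\exists\forall p\to\forall p$, $\exists p\to\forall\exists p$; closed under modus ponens, substitution and $\varphi/\forall\varphi$. $\mathsf{Kur}=\mathsf{MIPC}+\forall\neg\neg p\to\neg\neg\forall p$. $\mathsf{MS4}$ is the smallest set of formulas in the classical bimodal language $\mathcal{L}_{\Box\forall}$ containing all classical tautologies, the $\mathsf{S4}$ axioms for $\Box$, the $\mathsf{S5}$ axioms for $\forall$, and $\Box\forall p\to\forall\Box p$, closed under modus ponens, substitution, $\Box$- and $\forall$-necessitation; $\Diamond=\neg\Box\neg$, $\exists=\neg\forall\neg$. $\mathsf{MGrz}=\mathsf{MS4}+\Box(\Box(p\to\Box p)\to p)\to p$; $\mathsf{LKur}=\mathsf{MS4}+\Box\forall\Diamond\Box p\to\Diamond\forall p$; $\mathsf{N}=\mathsf{MS4}+\Box\exists p\to\Diamond\exists\Box p$; $\mathsf{GKur}=\mathsf{MS4}+\{\varphi^t:\mathsf{Kur}\vdash\varphi\}$,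 where $(-)^t$ is the Gödel translation: $\bot^t=\bot$, $p^t=\Box p$, $(\varphi\wedge\psi)^t=\varphi^t\wedge\psi^t$, $(\varphi\vee\psi)^t=\varphi^t\vee\psi^t$, $(\varphi\to\psi)^t=\Box(\neg\varphi^t\vee\psi^t)$, $(\forall\varphi)^t=\Box\forall\varphi^t$, $(\exists\varphi)^t=\exists\varphi^t$. *)

theory Defs
  imports Main
begin

datatype ifm = IBot | IVar nat | IAnd ifm ifm | IOr ifm ifm | IImp ifm ifm
  | IAll ifm | IEx ifm

definition INeg :: "ifm \<Rightarrow> ifm" where "INeg a = IImp a IBot"
definition IIff :: "ifm \<Rightarrow> ifm \<Rightarrow> ifm" where "IIff a b = IAnd (IImp a b) (IImp b a)"

primrec isubst :: "(nat \<Rightarrow> ifm) \<Rightarrow> ifm \<Rightarrow> ifm" where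
  "isubst s IBot = IBot"
| "isubst s (IVar n) = s n"
| "isubst s (IAnd a b) = IAnd (isubst s a) (isubst s b)"
| "isubst s (IOr a b) = IOr (isubst s a) (isubst s b)"
| "isubst s (IImp a b) = IImp (isubst s a) (isubst s b)"
| "isubst s (IAll a) = IAll (isubst s a)"
| "isubst s (IEx a) = IEx (isubst s a)"

abbreviation "ip \<equiv> IVar 0"
abbreviation "iq \<equiv> IVar 1"
abbreviation "ir \<equiv> IVar 2"

definition IPC_axioms :: "ifm set" where
  "IPC_axioms = {
     IImp ip (IImp iq ip),
     IImp (IImp ip (IImp iq ir)) (IImp (IImp ip iq) (IImp ip ir)),
     IImp (IAnd ip iq) ip,
     IImp (IAnd ip iq) iq,
     IImp ip (IImp iq (IAnd ip iq)),
     IImp ip (IOr ip iq),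
     IImp iq (IOr ip iq),
     IImp (IImp ip ir) (IImp (IImp iq ir) (IImp (IOr ip iq) ir)),
     IImp IBot ip }"

definition MIPC_axioms :: "ifm set" where
  "MIPC_axioms = {
     IIff (IAll (IAnd ip iq)) (IAnd (IAll ip) (IAll iq)),
     IImp (IAll ip) ip,
     IImp (IAll ip) (IAll (IAll ip)),
     IIff (IEx (IOr ip iq)) (IOr (IEx ip) (IEx iq)),
     IImp ip (IEx ip),
     IImp (IEx (IEx ip)) (IEx ip),
     IImp (IAnd (IEx ip) (IEx iq)) (IEx (IAnd (IEx ip) iq)),
     IImp (IEx (IAll ip)) (IAll ip),
     IImp (IEx ip) (IAll (IEx ip)) }"

inductive_set MIPC_ext :: "ifm set \<Rightarrow> ifm set" for G :: "ifm set" where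
  ipc: "a \<in> IPC_axioms \<Longrightarrow> a \<in> MIPC_ext G"
| ax: "a \<in> MIPC_axioms \<Longrightarrow> a \<in> MIPC_ext G"
| extra: "a \<in> G \<Longrightarrow> a \<in> MIPC_ext G"
| mp: "IImp a b \<in> MIPC_ext G \<Longrightarrow> a \<in> MIPC_ext G \<Longrightarrow> b \<in> MIPC_ext G"
| subst: "a \<in> MIPC_ext G \<Longrightarrow> isubst s a \<in> MIPC_ext G"
| nec: "a \<in> MIPC_ext G \<Longrightarrow> IAll a \<in> MIPC_ext G"

definition MIPC :: "ifm set" where "MIPC = MIPC_ext {}"

definition Kur :: "ifm set" where
  "Kur = MIPC_ext {IImp (IAll (INeg (INeg ip))) (INeg (INeg (IAll ip)))}"

datatype cfm = CBot | CVar nat | CAnd cfm cfm | COr cfm cfm | CImp cfm cfm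
  | CBox cfm | CAll cfm

definition CNeg :: "cfm \<Rightarrow> cfm" where "CNeg a = CImp a CBot"
definition CDia :: "cfm \<Rightarrow> cfm" where "CDia a = CNeg (CBox (CNeg a))"
definition CEx :: "cfm \<Rightarrow> cfm" where "CEx a = CNeg (CAll (CNeg a))"

primrec csubst :: "(nat \<Rightarrow> cfm) \<Rightarrow> cfm \<Rightarrow> cfm" where
  "csubst s CBot = CBot"
| "csubst s (CVar n) = s n"
| "csubst s (CAnd a b) = CAnd (csubst s a) (csubst s b)"
| "csubst s (COr a b) = COr (csubst s a) (csubst s b)"
| "csubst s (CImp a b) = CImp (csubst s a) (csubst s b)"
| "csubst s (CBox a) = CBox (csubst s a)"
| "csubst s (CAll a) = CAll (csubst s a)"

text \<open>Classical truth-functional evaluation, treating variables and modalised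
subformulas as atoms; tautologies are the formulas true under every such valuation
(this includes all substitution instances of propositional tautologies).\<close>

primrec peval :: "(cfm \<Rightarrow> bool) \<Rightarrow> cfm \<Rightarrow> bool" where
  "peval v CBot = False"
| "peval v (CVar n) = v (CVar n)"
| "peval v (CAnd a b) = (peval v a \<and> peval v b)"
| "peval v (COr a b) = (peval v a \<or> peval v b)"
| "peval v (CImp a b) = (peval v a \<longrightarrow> peval v b)"
| "peval v (CBox a) = v (CBox a)"
| "peval v (CAll a) = v (CAll a)"

definition tautology :: "cfm \<Rightarrow> bool" where
  "tautology a = (\<forall>v. peval v a)"

abbreviation "cp \<equiv> CVar 0"
abbreviation "cq \<equiv> CVar 1"

definition MS4_axioms :: "cfm set" where
  "MS4_axioms = {
     CImp (CBox (CImp cp cq)) (CImp (CBox cp) (CBox cq)),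
     CImp (CBox cp) cp,
     CImp (CBox cp) (CBox (CBox cp)),
     CImp (CAll (CImp cp cq)) (CImp (CAll cp) (CAll cq)),
     CImp (CAll cp) cp,
     CImp (CAll cp) (CAll (CAll cp)),
     CImp (CEx cp) (CAll (CEx cp)),
     CImp (CBox (CAll cp)) (CAll (CBox cp)) }"

inductive_set MS4_ext :: "cfm set \<Rightarrow> cfm set" for G :: "cfm set" where
  taut: "tautology a \<Longrightarrow> a \<in> MS4_ext G"
| ax: "a \<in> MS4_axioms \<Longrightarrow> a \<in> MS4_ext G"
| extra: "a \<in> G \<Longrightarrow> a \<in> MS4_ext G"
| mp: "CImp a b \<in> MS4_ext G \<Longrightarrow> a \<in> MS4_ext G \<Longrightarrow> b \<in> MS4_ext G"
| subst: "a \<in> MS4_ext G \<Longrightarrow> csubst s a \<in> MS4_ext G"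
| nec_box: "a \<in> MS4_ext G \<Longrightarrow> CBox a \<in> MS4_ext G"
| nec_all: "a \<in> MS4_ext G \<Longrightarrow> CAll a \<in> MS4_ext G"

definition MS4 :: "cfm set" where "MS4 = MS4_ext {}"

primrec goedel :: "ifm \<Rightarrow> cfm" where
  "goedel IBot = CBot"
| "goedel (IVar n) = CBox (CVar n)"
| "goedel (IAnd a b) = CAnd (goedel a) (goedel b)"
| "goedel (IOr a b) = COr (goedel a) (goedel b)"
| "goedel (IImp a b) = CBox (COr (CNeg (goedel a)) (goedel b))"
| "goedel (IAll a) = CBox (CAll (goedel a))"
| "goedel (IEx a) = CEx (goedel a)"

definition MGrz :: "cfm set" where
  "MGrz = MS4_ext {CImp (CBox (CImp (CBox (CImp cp (CBox cp))) cp)) cp}"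

definition LKur :: "cfm set" where
  "LKur = MS4_ext {CImp (CBox (CAll (CDia (CBox cp)))) (CDia (CAll cp))}"

definition Nlogic :: "cfm set" where
  "Nlogic = MS4_ext {CImp (CBox (CEx cp)) (CDia (CEx (CBox cp)))}"

definition GKur :: "cfm set" where
  "GKur = MS4_ext (goedel ` Kur)"

definition join :: "cfm set \<Rightarrow> cfm set \<Rightarrow> cfm set" where
  "join L1 L2 = MS4_ext (L1 \<union> L2)"

end

theory Submission imports Defs begin

(* Over MGrz the formula <>[](q --> []q) is a theorem for every q.  Instantiating the LKur
   axiom at q --> []q therefore gives <>forall(q --> []q), which together with []exists q
   yields <>exists []q: this is N.  Conversely, N gives []forall<>x --> <>forall x.  For a
   []-stable A (every Goedel translation is one), Grz shows that <>A implies
   <>(A & (forall A --> []forall A)); feeding this into N turns []forall<>A into <>[]forall A,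
   which is the translated Kuroda axiom, because the translation of a double negation
   ~~A is equivalent to []<>A.  As the Goedel translation of MIPC is sound over MS4, the
   translations of all Kur theorems follow.  Finally the translated Kuroda axiom at p := []p
   is LKur already over MS4. *)

lemmas derived_connective_defs = CNeg_def CDia_def CEx_def

lemma csubst_CNeg [simp]: "csubst s (CNeg a) = CNeg (csubst s a)"
  by (simp add: CNeg_def)

lemma csubst_CEx [simp]: "csubst s (CEx a) = CEx (csubst s a)"
  by (simp add: CEx_def)

lemma csubst_CDia [simp]: "csubst s (CDia a) = CDia (csubst s a)"
  by (simp add: CDia_def)

lemma tautological_consequence:
  assumes "set As \<subseteq> MS4_ext G" and "\<And>v. \<forall>a\<in>set As. peval v a \<Longrightarrow> peval v b"
  shows "b \<in> MS4_ext G"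
  using assms
proof (induction As arbitrary: b)
  case Nil
  then show ?case by (auto intro: MS4_ext.taut simp: tautology_def)
next
  case (Cons a As)
  have "CImp a b \<in> MS4_ext G" using Cons.IH[of "CImp a b"] Cons.prems by auto
  then show ?case using Cons.prems(1) by (auto intro: MS4_ext.mp)
qed

lemma tautological_consequence1:
  "a1 \<in> MS4_ext G \<Longrightarrow> (\<And>v. peval v a1 \<Longrightarrow> peval v b) \<Longrightarrow> b \<in> MS4_ext G"
  using tautological_consequence[of "[a1]"] by auto

lemma tautological_consequence2:
  "a1 \<in> MS4_ext G \<Longrightarrow> a2 \<in> MS4_ext G \<Longrightarrow>
    (\<And>v. peval v a1 \<Longrightarrow> peval v a2 \<Longrightarrow> peval v b) \<Longrightarrow> b \<in> MS4_ext G"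
  using tautological_consequence[of "[a1, a2]"] by auto

lemma tautological_consequence3:
  "a1 \<in> MS4_ext G \<Longrightarrow> a2 \<in> MS4_ext G \<Longrightarrow> a3 \<in> MS4_ext G \<Longrightarrow>
    (\<And>v. peval v a1 \<Longrightarrow> peval v a2 \<Longrightarrow> peval v a3 \<Longrightarrow> peval v b) \<Longrightarrow> b \<in> MS4_ext G"
  using tautological_consequence[of "[a1, a2, a3]"] by auto

lemma tautological_consequence4:
  "a1 \<in> MS4_ext G \<Longrightarrow> a2 \<in> MS4_ext G \<Longrightarrow> a3 \<in> MS4_ext G \<Longrightarrow> a4 \<in> MS4_ext G \<Longrightarrow>
    (\<And>v. peval v a1 \<Longrightarrow> peval v a2 \<Longrightarrow> peval v a3 \<Longrightarrow> peval v a4 \<Longrightarrow> peval v b) \<Longrightarrow>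
    b \<in> MS4_ext G"
  using tautological_consequence[of "[a1, a2, a3, a4]"] by auto

lemma tautological_consequence5:
  "a1 \<in> MS4_ext G \<Longrightarrow> a2 \<in> MS4_ext G \<Longrightarrow> a3 \<in> MS4_ext G \<Longrightarrow> a4 \<in> MS4_ext G \<Longrightarrow>
    a5 \<in> MS4_ext G \<Longrightarrow>
    (\<And>v. peval v a1 \<Longrightarrow> peval v a2 \<Longrightarrow> peval v a3 \<Longrightarrow> peval v a4 \<Longrightarrow> peval v a5 \<Longrightarrow>
      peval v b) \<Longrightarrow>
    b \<in> MS4_ext G"
  using tautological_consequence[of "[a1, a2, a3, a4, a5]"] by auto

lemma tautology_in_MS4_ext: "(\<And>v. peval v b) \<Longrightarrow> b \<in> MS4_ext G"
  by (auto intro: MS4_ext.taut simp: tautology_def)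

lemma imp_trans:
  assumes "CImp a b \<in> MS4_ext G" and "CImp b c \<in> MS4_ext G"
  shows "CImp a c \<in> MS4_ext G"
  using assms by (rule tautological_consequence2) auto

lemma MS4_ext_conjI: "a \<in> MS4_ext G \<Longrightarrow> b \<in> MS4_ext G \<Longrightarrow> CAnd a b \<in> MS4_ext G"
  by (rule tautological_consequence2) auto

lemma MS4_axiom_instance: "a \<in> MS4_axioms \<Longrightarrow> csubst s a \<in> MS4_ext G"
  by (intro MS4_ext.subst MS4_ext.ax)

lemma box_K: "CImp (CBox (CImp a b)) (CImp (CBox a) (CBox b)) \<in> MS4_ext G"
  using MS4_axiom_instance[of "CImp (CBox (CImp cp cq)) (CImp (CBox cp) (CBox cq))"
      "\<lambda>n. if n = 0 then a else b" G]
  by (simp add: MS4_axioms_def)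

lemma box_T: "CImp (CBox a) a \<in> MS4_ext G"
  using MS4_axiom_instance[of "CImp (CBox cp) cp" "\<lambda>_. a" G] by (simp add: MS4_axioms_def)

lemma box_4: "CImp (CBox a) (CBox (CBox a)) \<in> MS4_ext G"
  using MS4_axiom_instance[of "CImp (CBox cp) (CBox (CBox cp))" "\<lambda>_. a" G]
  by (simp add: MS4_axioms_def)

lemma all_K: "CImp (CAll (CImp a b)) (CImp (CAll a) (CAll b)) \<in> MS4_ext G"
  using MS4_axiom_instance[of "CImp (CAll (CImp cp cq)) (CImp (CAll cp) (CAll cq))"
      "\<lambda>n. if n = 0 then a else b" G]
  by (simp add: MS4_axioms_def)

lemma all_T: "CImp (CAll a) a \<in> MS4_ext G"
  using MS4_axiom_instance[of "CImp (CAll cp) cp" "\<lambda>_. a" G] by (simp add: MS4_axioms_def)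

lemma all_4: "CImp (CAll a) (CAll (CAll a)) \<in> MS4_ext G"
  using MS4_axiom_instance[of "CImp (CAll cp) (CAll (CAll cp))" "\<lambda>_. a" G]
  by (simp add: MS4_axioms_def)

lemma all_5: "CImp (CEx a) (CAll (CEx a)) \<in> MS4_ext G"
  using MS4_axiom_instance[of "CImp (CEx cp) (CAll (CEx cp))" "\<lambda>_. a" G]
  by (simp add: MS4_axioms_def)

lemma box_all_commute: "CImp (CBox (CAll a)) (CAll (CBox a)) \<in> MS4_ext G"
  using MS4_axiom_instance[of "CImp (CBox (CAll cp)) (CAll (CBox cp))" "\<lambda>_. a" G]
  by (simp add: MS4_axioms_def)

lemma box_T_rule: "CBox a \<in> MS4_ext G \<Longrightarrow> a \<in> MS4_ext G"
  using box_T MS4_ext.mp by blast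

lemma box_mono: "CImp a b \<in> MS4_ext G \<Longrightarrow> CImp (CBox a) (CBox b) \<in> MS4_ext G"
  using MS4_ext.nec_box box_K MS4_ext.mp by blast

lemma all_mono: "CImp a b \<in> MS4_ext G \<Longrightarrow> CImp (CAll a) (CAll b) \<in> MS4_ext G"
  using MS4_ext.nec_all all_K MS4_ext.mp by blast

lemma box_conj: "CImp (CAnd (CBox a) (CBox b)) (CBox (CAnd a b)) \<in> MS4_ext G"
proof -
  have "CImp (CBox a) (CBox (CImp b (CAnd a b))) \<in> MS4_ext G"
    by (rule box_mono, rule tautology_in_MS4_ext) auto
  from this box_K show ?thesis by (rule tautological_consequence2) auto
qed

lemma all_conj: "CImp (CAnd (CAll a) (CAll b)) (CAll (CAnd a b)) \<in> MS4_ext G"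
proof -
  have "CImp (CAll a) (CAll (CImp b (CAnd a b))) \<in> MS4_ext G"
    by (rule all_mono, rule tautology_in_MS4_ext) auto
  from this all_K show ?thesis by (rule tautological_consequence2) auto
qed

lemma box_mono2:
  "CImp (CAnd a b) c \<in> MS4_ext G \<Longrightarrow> CImp (CAnd (CBox a) (CBox b)) (CBox c) \<in> MS4_ext G"
  by (rule tautological_consequence2[OF box_mono box_conj[of a b]]) auto

lemma all_mono2:
  "CImp (CAnd a b) c \<in> MS4_ext G \<Longrightarrow> CImp (CAnd (CAll a) (CAll b)) (CAll c) \<in> MS4_ext G"
  by (rule tautological_consequence2[OF all_mono all_conj[of a b]]) auto

lemma dia_mono: "CImp a b \<in> MS4_ext G \<Longrightarrow> CImp (CDia a) (CDia b) \<in> MS4_ext G"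
  by (rule tautological_consequence1[OF box_mono[of "CNeg b" "CNeg a"]],
      erule tautological_consequence1) (auto simp: derived_connective_defs)

lemma ex_mono: "CImp a b \<in> MS4_ext G \<Longrightarrow> CImp (CEx a) (CEx b) \<in> MS4_ext G"
  by (rule tautological_consequence1[OF all_mono[of "CNeg b" "CNeg a"]],
      erule tautological_consequence1) (auto simp: derived_connective_defs)

lemma dia_T: "CImp a (CDia a) \<in> MS4_ext G"
  by (rule tautological_consequence1[OF box_T[of "CNeg a"]]) (auto simp: derived_connective_defs)

lemma ex_T: "CImp a (CEx a) \<in> MS4_ext G"
  by (rule tautological_consequence1[OF all_T[of "CNeg a"]]) (auto simp: derived_connective_defs)

lemma dia_4: "CImp (CDia (CDia a)) (CDia a) \<in> MS4_ext G"
proof -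
  have "CImp (CBox (CBox (CNeg a))) (CBox (CNeg (CNeg (CBox (CNeg a))))) \<in> MS4_ext G"
    by (rule box_mono, rule tautology_in_MS4_ext) (auto simp: derived_connective_defs)
  from this box_4 show ?thesis
    by (rule tautological_consequence2) (auto simp: derived_connective_defs)
qed

lemma ex_4: "CImp (CEx (CEx a)) (CEx a) \<in> MS4_ext G"
proof -
  have "CImp (CAll (CAll (CNeg a))) (CAll (CNeg (CNeg (CAll (CNeg a))))) \<in> MS4_ext G"
    by (rule all_mono, rule tautology_in_MS4_ext) (auto simp: derived_connective_defs)
  from this all_4 show ?thesis
    by (rule tautological_consequence2) (auto simp: derived_connective_defs)
qed

lemma box_dia_conj: "CImp (CAnd (CBox a) (CDia b)) (CDia (CAnd a b)) \<in> MS4_ext G"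
proof -
  have "CImp (CBox a) (CBox (CImp (CNeg (CAnd a b)) (CNeg b))) \<in> MS4_ext G"
    by (rule box_mono, rule tautology_in_MS4_ext) (auto simp: derived_connective_defs)
  from this box_K show ?thesis
    by (rule tautological_consequence2) (auto simp: derived_connective_defs)
qed

lemma all_ex_conj: "CImp (CAnd (CAll a) (CEx b)) (CEx (CAnd a b)) \<in> MS4_ext G"
proof -
  have "CImp (CAll a) (CAll (CImp (CNeg (CAnd a b)) (CNeg b))) \<in> MS4_ext G"
    by (rule all_mono, rule tautology_in_MS4_ext) (auto simp: derived_connective_defs)
  from this all_K show ?thesis
    by (rule tautological_consequence2) (auto simp: derived_connective_defs)
qed

lemma ex_disj: "CImp (CEx (COr a b)) (COr (CEx a) (CEx b)) \<in> MS4_ext G"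
proof -
  have "CImp (CAnd (CAll (CNeg a)) (CAll (CNeg b))) (CAll (CNeg (COr a b))) \<in> MS4_ext G"
    by (rule all_mono2, rule tautology_in_MS4_ext) (auto simp: derived_connective_defs)
  then show ?thesis by (rule tautological_consequence1) (auto simp: derived_connective_defs)
qed

lemma disj_ex: "CImp (COr (CEx a) (CEx b)) (CEx (COr a b)) \<in> MS4_ext G"
proof -
  have "CImp (CEx a) (CEx (COr a b)) \<in> MS4_ext G"
    by (rule ex_mono, rule tautology_in_MS4_ext) auto
  moreover have "CImp (CEx b) (CEx (COr a b)) \<in> MS4_ext G"
    by (rule ex_mono, rule tautology_in_MS4_ext) auto
  ultimately show ?thesis by (rule tautological_consequence2) auto
qed

lemma ex_all: "CImp (CEx (CAll a)) (CAll a) \<in> MS4_ext G"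
proof -
  have dneg: "CImp (CAll (CNeg (CNeg a))) (CAll a) \<in> MS4_ext G"
    by (rule all_mono, rule tautology_in_MS4_ext) (auto simp: derived_connective_defs)
  have "CImp (CAll a) (CAll (CNeg (CNeg a))) \<in> MS4_ext G"
    by (rule all_mono, rule tautology_in_MS4_ext) (auto simp: derived_connective_defs)
  then have "CImp (CEx (CNeg a)) (CNeg (CAll a)) \<in> MS4_ext G"
    by (rule tautological_consequence1) (auto simp: derived_connective_defs)
  from dneg all_mono[OF this] all_5[of "CNeg a"] show ?thesis
    by (rule tautological_consequence3) (auto simp: derived_connective_defs)
qed

lemma box_all_4: "CImp (CBox (CAll a)) (CAll (CBox (CAll a))) \<in> MS4_ext G"
  by (rule tautological_consequence2[OF box_mono[OF all_4] box_all_commute]) auto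

lemma box_ex_5: "CImp (CBox (CEx a)) (CAll (CBox (CEx a))) \<in> MS4_ext G"
  by (rule tautological_consequence3[OF box_mono[OF all_5] box_all_4 all_mono[OF box_mono[OF all_T]]])
    auto

lemma ex_box: "CImp (CEx (CBox a)) (CBox (CEx a)) \<in> MS4_ext G"
  by (rule tautological_consequence4[OF ex_mono[OF box_mono[OF ex_T]] ex_mono[OF box_ex_5] ex_all all_T])
    auto

definition box_stable :: "cfm set \<Rightarrow> cfm \<Rightarrow> bool" where
  "box_stable G a \<longleftrightarrow> CImp a (CBox a) \<in> MS4_ext G"

lemma box_stable_box: "box_stable G (CBox a)"
  unfolding box_stable_def by (rule box_4)

lemma box_stable_bot: "box_stable G CBot"
  unfolding box_stable_def by (rule tautology_in_MS4_ext) auto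

lemma box_stable_conj:
  assumes "box_stable G a" and "box_stable G b"
  shows "box_stable G (CAnd a b)"
  using assms box_conj[of a b] unfolding box_stable_def by (rule tautological_consequence3) auto

lemma box_stable_disj:
  assumes "box_stable G a" and "box_stable G b"
  shows "box_stable G (COr a b)"
proof -
  have "CImp (CBox a) (CBox (COr a b)) \<in> MS4_ext G"
    by (rule box_mono, rule tautology_in_MS4_ext) auto
  moreover have "CImp (CBox b) (CBox (COr a b)) \<in> MS4_ext G"
    by (rule box_mono, rule tautology_in_MS4_ext) auto
  ultimately show ?thesis
    using assms unfolding box_stable_def by (rule tautological_consequence4) auto
qed

lemma box_stable_ex: "box_stable G a \<Longrightarrow> box_stable G (CEx a)"
  unfolding box_stable_def by (rule tautological_consequence2[OF ex_mono ex_box]) auto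

lemma box_stable_goedel: "box_stable G (goedel a)"
  by (induction a)
    (auto intro: box_stable_box box_stable_bot box_stable_conj box_stable_disj box_stable_ex)

abbreviation strict_imp :: "cfm \<Rightarrow> cfm \<Rightarrow> cfm" where
  "strict_imp a b \<equiv> CBox (COr (CNeg a) b)"

lemma strict_imp_nec: "CImp a b \<in> MS4_ext G \<Longrightarrow> strict_imp a b \<in> MS4_ext G"
  by (rule MS4_ext.nec_box, erule tautological_consequence1) (auto simp: derived_connective_defs)

lemma strict_imp_intro:
  assumes "box_stable G z" and "CImp (CAnd z a) b \<in> MS4_ext G"
  shows "CImp z (strict_imp a b) \<in> MS4_ext G"
proof -
  have "CImp z (COr (CNeg a) b) \<in> MS4_ext G"
    by (rule tautological_consequence1[OF assms(2)]) (auto simp: derived_connective_defs)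
  from box_mono[OF this] assms(1)[unfolded box_stable_def] show ?thesis
    by (rule tautological_consequence2) auto
qed

lemma strict_imp_mp: "CImp (CAnd (strict_imp a b) a) b \<in> MS4_ext G"
  by (rule tautological_consequence1[OF box_T]) (auto simp: derived_connective_defs)

lemma strict_imp_imp: "strict_imp a b \<in> MS4_ext G \<Longrightarrow> CImp a b \<in> MS4_ext G"
  by (drule box_T_rule, erule tautological_consequence1) (auto simp: derived_connective_defs)

lemma strict_imp_S:
  "strict_imp (strict_imp a (strict_imp b c)) (strict_imp (strict_imp a b) (strict_imp a c))
    \<in> MS4_ext G"
proof -
  let ?X = "strict_imp a (strict_imp b c)" and ?Y = "strict_imp a b"
  have "CImp (CAnd (CAnd ?X ?Y) a) c \<in> MS4_ext G"
    using strict_imp_mp[of a "strict_imp b c"] strict_imp_mp[of a b] strict_imp_mp[of b c]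
    by (rule tautological_consequence3) auto
  then have "CImp (CAnd ?X ?Y) (strict_imp a c) \<in> MS4_ext G"
    by (rule strict_imp_intro[OF box_stable_conj[OF box_stable_box box_stable_box]])
  then show ?thesis by (intro strict_imp_nec strict_imp_intro[OF box_stable_box])
qed

lemma strict_imp_disj_elim:
  "strict_imp (strict_imp a c) (strict_imp (strict_imp b c) (strict_imp (COr a b) c)) \<in> MS4_ext G"
proof -
  let ?X = "strict_imp a c" and ?Y = "strict_imp b c"
  have "CImp (CAnd (CAnd ?X ?Y) (COr a b)) c \<in> MS4_ext G"
    using strict_imp_mp[of a c] strict_imp_mp[of b c] by (rule tautological_consequence2) auto
  then have "CImp (CAnd ?X ?Y) (strict_imp (COr a b) c) \<in> MS4_ext G"
    by (rule strict_imp_intro[OF box_stable_conj[OF box_stable_box box_stable_box]])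
  then show ?thesis by (intro strict_imp_nec strict_imp_intro[OF box_stable_box])
qed

lemma goedel_IPC_axiom:
  assumes "a \<in> IPC_axioms"
  shows "goedel (isubst s a) \<in> MS4_ext G"
proof -
  have stable: "box_stable G (goedel (s n))" for n
    by (rule box_stable_goedel)
  have taut: "strict_imp a b \<in> MS4_ext G" if "\<And>v. peval v a \<Longrightarrow> peval v b" for a b
    by (rule strict_imp_nec, rule tautology_in_MS4_ext) (use that in auto)
  have taut_curried: "strict_imp a (strict_imp b c) \<in> MS4_ext G"
    if "box_stable G a" and "\<And>v. peval v a \<Longrightarrow> peval v b \<Longrightarrow> peval v c" for a b c
    by (intro strict_imp_nec strict_imp_intro that(1) tautology_in_MS4_ext) (use that(2) in auto)
  txt \<open>Apart from S and disjunction elimination, each translated axiom is a tautology once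
    the stability of its antecedent is used to pull out the inner strict implication.\<close>
  from assms show ?thesis
    unfolding IPC_axioms_def
    by (safe, simp_all only: isubst.simps goedel.simps)
      (rule strict_imp_S strict_imp_disj_elim taut_curried[OF stable] taut; simp)+
qed

lemma goedel_MIPC_axiom:
  assumes "a \<in> MIPC_axioms"
  shows "goedel (isubst s a) \<in> MS4_ext G"
proof -
  have box_all_conj_dist: "CImp (CBox (CAll (CAnd a b))) (CAnd (CBox (CAll a)) (CBox (CAll b)))
      \<in> MS4_ext G" for a b
  proof -
    have "CImp (CBox (CAll (CAnd a b))) (CBox (CAll a)) \<in> MS4_ext G"
      by (intro box_mono all_mono tautology_in_MS4_ext) auto
    moreover have "CImp (CBox (CAll (CAnd a b))) (CBox (CAll b)) \<in> MS4_ext G"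
      by (intro box_mono all_mono tautology_in_MS4_ext) auto
    ultimately show ?thesis by (rule tautological_consequence2) auto
  qed
  have box_all_T: "CImp (CBox (CAll a)) a \<in> MS4_ext G" for a
    using box_T all_T by (rule tautological_consequence2) auto
  have box_all_box_all: "CImp (CBox (CAll a)) (CBox (CAll (CBox (CAll a)))) \<in> MS4_ext G" for a
    using box_4 box_mono[OF box_all_4] by (rule tautological_consequence2) auto
  have ex_conj_ex: "CImp (CAnd (CEx a) (CEx b)) (CEx (CAnd (CEx a) b)) \<in> MS4_ext G" for a b
    using all_5 all_ex_conj[of "CEx a" b] by (rule tautological_consequence2) auto
  have ex_box_all: "CImp (CEx (CBox (CAll a))) (CBox (CAll a)) \<in> MS4_ext G" for a
    using ex_mono[OF box_all_4] ex_all all_T[of "CBox (CAll a)"] by (rule tautological_consequence3) auto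
  have ex_box_all_ex: "CImp (CEx a) (CBox (CAll (CEx a))) \<in> MS4_ext G" if "box_stable G a" for a
    using box_stable_ex[OF that] box_mono[OF all_5]
    unfolding box_stable_def by (rule tautological_consequence2) auto
  from assms show ?thesis
    unfolding MIPC_axioms_def IIff_def
    by (safe, simp_all only: isubst.simps goedel.simps)
      (intro MS4_ext_conjI strict_imp_nec box_all_conj_dist box_mono2 all_conj box_all_T
        box_all_box_all ex_disj disj_ex ex_T ex_4 ex_conj_ex ex_box_all ex_box_all_ex
        box_stable_goedel)+
qed

lemma isubst_isubst: "isubst s (isubst s' a) = isubst (\<lambda>n. isubst s (s' n)) a"
  by (induction a) auto

lemma isubst_IVar: "isubst IVar a = a"
  by (induction a) auto

lemma goedel_MIPC_ext:
  assumes extra: "\<And>a s. a \<in> H \<Longrightarrow> goedel (isubst s a) \<in> MS4_ext G"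
    and "a \<in> MIPC_ext H"
  shows "goedel (isubst s a) \<in> MS4_ext G"
  using assms(2)
proof (induction a arbitrary: s rule: MIPC_ext.induct)
  case (ipc a)
  then show ?case by (rule goedel_IPC_axiom)
next
  case (ax a)
  then show ?case by (rule goedel_MIPC_axiom)
next
  case (extra a)
  then show ?case by (rule assms(1))
next
  case (mp a b)
  have "CImp (goedel (isubst s a)) (goedel (isubst s b)) \<in> MS4_ext G"
    using mp.IH(1) by (simp add: strict_imp_imp)
  then show ?case using mp.IH(2) by (rule MS4_ext.mp)
next
  case (subst a s')
  then show ?case by (simp add: isubst_isubst)
next
  case (nec a)
  then show ?case by (auto intro: MS4_ext.nec_box MS4_ext.nec_all)
qed

abbreviation Kur_axiom :: ifm where
  "Kur_axiom \<equiv> IImp (IAll (INeg (INeg ip))) (INeg (INeg (IAll ip)))"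

lemma goedel_Kur:
  assumes "\<And>s. goedel (isubst s Kur_axiom) \<in> MS4_ext G"
  shows "goedel ` Kur \<subseteq> MS4_ext G"
proof
  fix b
  assume "b \<in> goedel ` Kur"
  then obtain a where a: "a \<in> MIPC_ext {Kur_axiom}" and b: "b = goedel a"
    by (auto simp: Kur_def)
  have "goedel (isubst IVar a) \<in> MS4_ext G"
    by (rule goedel_MIPC_ext[OF _ a]) (use assms in blast)
  then show "b \<in> MS4_ext G"
    by (simp add: b isubst_IVar)
qed

lemma strict_dneg_box_dia: "CImp (strict_imp (strict_imp a CBot) CBot) (CBox (CDia a)) \<in> MS4_ext G"
proof -
  have "CImp (CBox (CNeg a)) (strict_imp a CBot) \<in> MS4_ext G"
    by (rule box_mono, rule tautology_in_MS4_ext) (auto simp: derived_connective_defs)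
  then have "CImp (COr (CNeg (strict_imp a CBot)) CBot) (CDia a) \<in> MS4_ext G"
    by (rule tautological_consequence1) (auto simp: derived_connective_defs)
  then show ?thesis by (rule box_mono)
qed

lemma box_dia_strict_dneg: "CImp (CBox (CDia a)) (strict_imp (strict_imp a CBot) CBot) \<in> MS4_ext G"
proof -
  have "CImp (strict_imp a CBot) (CBox (CNeg a)) \<in> MS4_ext G"
    by (rule box_mono, rule tautology_in_MS4_ext) (auto simp: derived_connective_defs)
  then have "CImp (CDia a) (COr (CNeg (strict_imp a CBot)) CBot) \<in> MS4_ext G"
    by (rule tautological_consequence1) (auto simp: derived_connective_defs)
  then show ?thesis by (rule box_mono)
qed

abbreviation Grz_axiom :: cfm where
  "Grz_axiom \<equiv> CImp (CBox (CImp (CBox (CImp cp (CBox cp))) cp)) cp"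

abbreviation LKur_axiom :: cfm where
  "LKur_axiom \<equiv> CImp (CBox (CAll (CDia (CBox cp)))) (CDia (CAll cp))"

abbreviation N_axiom :: cfm where
  "N_axiom \<equiv> CImp (CBox (CEx cp)) (CDia (CEx (CBox cp)))"

lemma Grz_dia_box:
  assumes "Grz_axiom \<in> MS4_ext G"
  shows "CDia (CBox (CImp q (CBox q))) \<in> MS4_ext G"
proof -
  txt \<open>Read contrapositively, Grz gives \<not>q \<longrightarrow> \<diamond>\<box>(q \<longrightarrow> \<box>q); if instead \<box>q, then \<box>(q \<longrightarrow> \<box>q) holds
    outright, and \<diamond>\<not>q reduces to the first case.\<close>
  let ?s = "CImp q (CBox q)"
  have grz: "CImp (CBox (CImp (CBox ?s) q)) q \<in> MS4_ext G"
    using MS4_ext.subst[OF assms, of "\<lambda>_. q"] by simp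
  have "CImp (CBox (CNeg (CNeg (CImp (CBox ?s) q)))) (CBox (CImp (CBox ?s) q)) \<in> MS4_ext G"
    by (rule box_mono, rule tautology_in_MS4_ext) (auto simp: derived_connective_defs)
  moreover have "CImp (CDia (CNeg (CImp (CBox ?s) q))) (CDia (CBox ?s)) \<in> MS4_ext G"
    by (rule dia_mono, rule tautology_in_MS4_ext) (auto simp: derived_connective_defs)
  ultimately have not_q: "CImp (CNeg q) (CDia (CBox ?s)) \<in> MS4_ext G"
    using grz by (rule tautological_consequence3) (auto simp: derived_connective_defs)
  have "CImp (CBox (CBox q)) (CBox ?s) \<in> MS4_ext G"
    by (rule box_mono, rule tautology_in_MS4_ext) auto
  then have box_q: "CImp (CBox q) (CDia (CBox ?s)) \<in> MS4_ext G"
    using box_4 dia_T by (rule tautological_consequence3) auto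
  have "CImp (CBox (CNeg (CNeg q))) (CBox q) \<in> MS4_ext G"
    by (rule box_mono, rule tautology_in_MS4_ext) (auto simp: derived_connective_defs)
  from not_q box_q this dia_mono[OF not_q] dia_4 show ?thesis
    by (rule tautological_consequence5) (auto simp: derived_connective_defs)
qed

lemma N_all_dia:
  assumes "N_axiom \<in> MS4_ext G"
  shows "CImp (CBox (CAll (CDia a))) (CDia (CAll a)) \<in> MS4_ext G"
proof -
  have N: "CImp (CBox (CEx (CNeg a))) (CDia (CEx (CBox (CNeg a)))) \<in> MS4_ext G"
    using MS4_ext.subst[OF assms, of "\<lambda>_. CNeg a"] by simp
  have "CImp (CAll (CNeg (CNeg a))) (CAll a) \<in> MS4_ext G"
    by (rule all_mono, rule tautology_in_MS4_ext) (auto simp: derived_connective_defs)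
  then have "CImp (CNeg (CAll a)) (CEx (CNeg a)) \<in> MS4_ext G"
    by (rule tautological_consequence1) (auto simp: derived_connective_defs)
  then have "CImp (CBox (CNeg (CAll a))) (CBox (CEx (CNeg a))) \<in> MS4_ext G"
    by (rule box_mono)
  moreover have "CImp (CBox (CAll (CDia a))) (CBox (CNeg (CEx (CBox (CNeg a))))) \<in> MS4_ext G"
    by (rule box_mono, rule tautology_in_MS4_ext) (auto simp: derived_connective_defs)
  ultimately show ?thesis
    using N by (rule tautological_consequence3) (auto simp: derived_connective_defs)
qed

lemma N_axiom_from_Grz_LKur:
  assumes "Grz_axiom \<in> MS4_ext G" and "LKur_axiom \<in> MS4_ext G"
  shows "N_axiom \<in> MS4_ext G"
proof -
  let ?s = "CImp cp (CBox cp)"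
  have "CImp (CBox (CAll (CDia (CBox ?s)))) (CDia (CAll ?s)) \<in> MS4_ext G"
    using MS4_ext.subst[OF assms(2), of "\<lambda>_. ?s"] by simp
  moreover have "CBox (CAll (CDia (CBox ?s))) \<in> MS4_ext G"
    by (intro MS4_ext.nec_box MS4_ext.nec_all Grz_dia_box assms(1))
  ultimately have dia_all: "CDia (CAll ?s) \<in> MS4_ext G"
    by (rule MS4_ext.mp)
  have "CImp (CEx (CAnd ?s cp)) (CEx (CBox cp)) \<in> MS4_ext G"
    by (rule ex_mono, rule tautology_in_MS4_ext) auto
  with all_ex_conj[of ?s cp] have "CImp (CAnd (CEx cp) (CAll ?s)) (CEx (CBox cp)) \<in> MS4_ext G"
    by (rule tautological_consequence2) auto
  from dia_all box_dia_conj[of "CEx cp" "CAll ?s"] dia_mono[OF this] show ?thesis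
    by (rule tautological_consequence3) auto
qed

lemma Grz_dia_witness:
  assumes "Grz_axiom \<in> MS4_ext G" and "box_stable G a"
  shows "CImp (CDia a) (CDia (CAnd a (CImp (CAll a) (CBox (CAll a))))) \<in> MS4_ext G"
proof -
  let ?t = "CImp (CAll a) (CBox (CAll a))"
  have "CImp (CAnd a (CBox ?t)) (CAnd a ?t) \<in> MS4_ext G"
    using box_T[of ?t] by (rule tautological_consequence1) auto
  with assms(2)[unfolded box_stable_def] Grz_dia_box[OF assms(1)] box_dia_conj[of a "CBox ?t"]
  have "CImp a (CDia (CAnd a ?t)) \<in> MS4_ext G"
    by (rule tautological_consequence4[OF _ _ _ dia_mono]) auto
  from dia_mono[OF this] dia_4 show ?thesis
    by (rule tautological_consequence2) auto
qed

lemma Grz_N_box_all_dia: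
  assumes "Grz_axiom \<in> MS4_ext G" and "N_axiom \<in> MS4_ext G" and "box_stable G a"
  shows "CImp (CBox (CAll (CDia a))) (CDia (CBox (CAll a))) \<in> MS4_ext G"
proof -
  let ?r = "CAnd a (CImp (CAll a) (CBox (CAll a)))"
  have "CImp (CAll ?r) (CAll a) \<in> MS4_ext G"
    by (rule all_mono, rule tautology_in_MS4_ext) auto
  moreover have "CImp (CAll ?r) (CAll (CImp (CAll a) (CBox (CAll a)))) \<in> MS4_ext G"
    by (rule all_mono, rule tautology_in_MS4_ext) auto
  ultimately have "CImp (CAll ?r) (CBox (CAll a)) \<in> MS4_ext G"
    using all_T by (rule tautological_consequence3) auto
  from box_mono[OF all_mono[OF Grz_dia_witness[OF assms(1,3)]]] N_all_dia[OF assms(2), of ?r]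
    dia_mono[OF this]
  show ?thesis by (rule tautological_consequence3) auto
qed

lemma goedel_Kur_axiom_from_Grz_N:
  assumes "Grz_axiom \<in> MS4_ext G" and "N_axiom \<in> MS4_ext G"
  shows "goedel (isubst s Kur_axiom) \<in> MS4_ext G"
proof -
  let ?a = "goedel (s 0)"
  let ?H = "CBox (CAll (strict_imp (strict_imp ?a CBot) CBot))"
  have "CImp ?H (CBox (CAll (CDia ?a))) \<in> MS4_ext G"
    using strict_dneg_box_dia box_T by (rule box_mono[OF all_mono[OF tautological_consequence2]]) auto
  with Grz_N_box_all_dia[OF assms box_stable_goedel[of G "s 0"]]
  have "CImp ?H (CDia (CBox (CAll ?a))) \<in> MS4_ext G"
    by (rule tautological_consequence2) auto
  from box_4 box_mono[OF this] box_dia_strict_dneg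
  have "CImp ?H (strict_imp (strict_imp (CBox (CAll ?a)) CBot) CBot) \<in> MS4_ext G"
    by (rule tautological_consequence3) auto
  then show ?thesis by (simp add: INeg_def strict_imp_nec)
qed

lemma LKur_axiom_from_goedel_Kur:
  assumes "goedel Kur_axiom \<in> MS4_ext G"
  shows "LKur_axiom \<in> MS4_ext G"
proof -
  let ?H = "CBox (CAll (strict_imp (strict_imp (CBox cp) CBot) CBot))"
  let ?C = "strict_imp (strict_imp (CBox (CAll (CBox cp))) CBot) CBot"
  have Kur: "CImp ?H ?C \<in> MS4_ext G"
    using assms by (simp add: INeg_def strict_imp_imp)
  have "CImp (CBox (CAll (CDia (CBox cp)))) (CBox (CAll (CBox (CDia (CBox cp))))) \<in> MS4_ext G"
    using box_4 box_mono[OF box_all_commute] by (rule tautological_consequence2) auto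
  then have hyp: "CImp (CBox (CAll (CDia (CBox cp)))) ?H \<in> MS4_ext G"
    using box_mono[OF all_mono[OF box_dia_strict_dneg]] by (rule imp_trans)
  have concl: "CImp ?C (CDia (CAll cp)) \<in> MS4_ext G"
    using imp_trans[OF strict_dneg_box_dia box_T] dia_mono[OF imp_trans[OF box_T all_mono[OF box_T]]]
    by (rule imp_trans)
  show ?thesis
    using imp_trans[OF hyp Kur] concl by (rule imp_trans)
qed

lemma MS4_ext_subsetI:
  assumes "G \<subseteq> MS4_ext H"
  shows "MS4_ext G \<subseteq> MS4_ext H"
proof
  fix a
  assume "a \<in> MS4_ext G"
  then show "a \<in> MS4_ext H"
    by (induction a rule: MS4_ext.induct) (use assms in \<open>auto intro: MS4_ext.intros\<close>)
qed

lemma join_MS4_ext_subset: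
  assumes "A \<subseteq> join M L"
  shows "join M (MS4_ext A) \<subseteq> join M L"
proof -
  have "M \<subseteq> MS4_ext (M \<union> L)"
    by (auto intro: MS4_ext.extra)
  moreover have "MS4_ext A \<subseteq> MS4_ext (M \<union> L)"
    using assms unfolding join_def by (rule MS4_ext_subsetI)
  ultimately show ?thesis
    unfolding join_def by (rule MS4_ext_subsetI[OF Un_least])
qed

theorem proposition5p10:
  shows "join MGrz GKur = join MGrz LKur \<and> join MGrz LKur = join MGrz Nlogic"
proof -
  have Grz: "Grz_axiom \<in> join MGrz L" for L
    by (simp add: join_def MGrz_def MS4_ext.extra)
  have "goedel Kur_axiom \<in> GKur"
    unfolding GKur_def Kur_def by (intro MS4_ext.extra imageI MIPC_ext.extra) simp
  then have "LKur_axiom \<in> join MGrz GKur"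
    unfolding join_def by (intro LKur_axiom_from_goedel_Kur) (simp add: MS4_ext.extra)
  then have LKur_GKur: "join MGrz LKur \<subseteq> join MGrz GKur"
    unfolding LKur_def by (intro join_MS4_ext_subset) simp
  have "LKur_axiom \<in> join MGrz LKur"
    by (simp add: join_def LKur_def MS4_ext.extra)
  with Grz have "N_axiom \<in> join MGrz LKur"
    unfolding join_def by (rule N_axiom_from_Grz_LKur)
  then have N_LKur: "join MGrz Nlogic \<subseteq> join MGrz LKur"
    unfolding Nlogic_def by (intro join_MS4_ext_subset) simp
  have "N_axiom \<in> join MGrz Nlogic"
    by (simp add: join_def Nlogic_def MS4_ext.extra)
  with Grz have "goedel (isubst s Kur_axiom) \<in> join MGrz Nlogic" for s
    unfolding join_def by (rule goedel_Kur_axiom_from_Grz_N)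
  then have "goedel ` Kur \<subseteq> join MGrz Nlogic"
    unfolding join_def by (rule goedel_Kur)
  then have GKur_N: "join MGrz GKur \<subseteq> join MGrz Nlogic"
    unfolding GKur_def by (rule join_MS4_ext_subset)
  from LKur_GKur N_LKur GKur_N show ?thesis
    by (metis order.trans subset_antisym)
qed

end
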